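(* Every finite quasigroup $\langle A;\cdot\rangle$ which is an Abelian algebra is a Hamiltonian algebra.
   Context: A quasigroup is here the algebra $\langle A;\cdot\rangle$ with one binary operation such that for all $a,b\in A$ there are unique $x,y\in A$ with $x\cdot a=b$ and $a\cdot y=b$; its subalgebras are the nonempty subsets closed under $\cdot$. A polynomial operation of an algebra is an operation obtained from a term by substituting elements of the algebra for some of its variables. An algebra is called Abelian if for every polynomial operation $t(x,y_1,\ldots,y_n)$ and all elements $u,v,c_1,\ldots,c_n,d_1,\ldots,d_n$ of the algebra, $t(u,c_1,\ldots,c_n)=t(u,d_1,\ldots,d_n)$ implies $t(v,c_1,\ldots,c_n)=t(v,d_1,\ldots,d_n)$. An algebra is called Hamiltonian if the universe of every subalgebra is an equivalence class (block) of some congruence of the algebra. *)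

theory Defs
  imports Main
begin

definition quasigroup :: "'a set \<Rightarrow> ('a \<Rightarrow> 'a \<Rightarrow> 'a) \<Rightarrow> bool" where
  "quasigroup A m \<longleftrightarrow>
     (\<forall>a\<in>A. \<forall>b\<in>A. m a b \<in> A) \<and>
     (\<forall>a\<in>A. \<forall>b\<in>A. (\<exists>!x. x \<in> A \<and> m x a = b) \<and> (\<exists>!y. y \<in> A \<and> m a y = b))"

datatype 'a pterm = Var nat | Const 'a | Mul "'a pterm" "'a pterm"

fun consts_of :: "'a pterm \<Rightarrow> 'a set" where
  "consts_of (Var i) = {}"
| "consts_of (Const c) = {c}"
| "consts_of (Mul s t) = consts_of s \<union> consts_of t"

fun peval :: "('a \<Rightarrow> 'a \<Rightarrow> 'a) \<Rightarrow> 'a pterm \<Rightarrow> (nat \<Rightarrow> 'a) \<Rightarrow> 'a" where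
  "peval m (Var i) e = e i"
| "peval m (Const c) e = c"
| "peval m (Mul s t) e = m (peval m s e) (peval m t e)"

text \<open>Abelian: for every polynomial t(x, y_1, ..., y_n) (variable 0 plays the role
of x, the remaining variables the role of the y's), t(u,c) = t(u,d) implies t(v,c) = t(v,d).\<close>
definition abelian_alg :: "'a set \<Rightarrow> ('a \<Rightarrow> 'a \<Rightarrow> 'a) \<Rightarrow> bool" where
  "abelian_alg A m \<longleftrightarrow>
     (\<forall>t. consts_of t \<subseteq> A \<longrightarrow>
        (\<forall>u\<in>A. \<forall>v\<in>A. \<forall>c d. (\<forall>i. c i \<in> A) \<longrightarrow> (\<forall>i. d i \<in> A) \<longrightarrow>
           peval m t (c(0 := u)) = peval m t (d(0 := u)) \<longrightarrow>
           peval m t (c(0 := v)) = peval m t (d(0 := v))))"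

definition subalgebra :: "'a set \<Rightarrow> ('a \<Rightarrow> 'a \<Rightarrow> 'a) \<Rightarrow> 'a set \<Rightarrow> bool" where
  "subalgebra A m B \<longleftrightarrow> B \<noteq> {} \<and> B \<subseteq> A \<and> (\<forall>a\<in>B. \<forall>b\<in>B. m a b \<in> B)"

definition congruence :: "'a set \<Rightarrow> ('a \<Rightarrow> 'a \<Rightarrow> 'a) \<Rightarrow> 'a rel \<Rightarrow> bool" where
  "congruence A m \<theta> \<longleftrightarrow> equiv A \<theta> \<and>
     (\<forall>a b c d. (a, b) \<in> \<theta> \<longrightarrow> (c, d) \<in> \<theta> \<longrightarrow> (m a c, m b d) \<in> \<theta>)"

definition hamiltonian_alg :: "'a set \<Rightarrow> ('a \<Rightarrow> 'a \<Rightarrow> 'a) \<Rightarrow> bool" where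
  "hamiltonian_alg A m \<longleftrightarrow>
     (\<forall>B. subalgebra A m B \<longrightarrow> (\<exists>\<theta>. congruence A m \<theta> \<and> B \<in> A // \<theta>))"

end

theory Submission
  imports Defs "HOL-Library.FuncSet"
begin

text \<open>In a finite quasigroup all translations are permutations, so a common power of them
  is the identity and the divisions x\y, x/y are term operations; hence
  malcev x y z = (x / (y\y)) (y\z) is a Mal'cev term.  For a subalgebra B, let \<theta> consist
  of the pairs (t(x), t(y)) with t a constant-free term and x, y tuples that differ only in
  coordinates where both lie in B.  The Mal'cev term makes \<theta> transitive, so \<theta> is a
  congruence containing B \<times> B.  If a \<in> B and a \<theta> b, the term condition yields malcev b a k \<in> B for some k \<in> B;
  since x \<mapsto> malcev x a k is injective and maps the finite set B into itself, b \<in> B.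
  Thus B is a \<theta>-class.\<close>

fun psubst :: "(nat \<Rightarrow> 'a pterm) \<Rightarrow> 'a pterm \<Rightarrow> 'a pterm" where
  "psubst \<sigma> (Var i) = \<sigma> i"
| "psubst \<sigma> (Const c) = Const c"
| "psubst \<sigma> (Mul s t) = Mul (psubst \<sigma> s) (psubst \<sigma> t)"

lemma peval_psubst: "peval m (psubst \<sigma> t) e = peval m t (\<lambda>i. peval m (\<sigma> i) e)"
  by (induction t) auto

lemma consts_of_rename: "consts_of (psubst (\<lambda>i. Var (\<rho> i)) t) = consts_of t"
  by (induction t) auto

definition fix_vars :: "nat set \<Rightarrow> (nat \<Rightarrow> 'a) \<Rightarrow> 'a pterm \<Rightarrow> 'a pterm" where
  "fix_vars X e = psubst (\<lambda>j. if j \<in> X then Const (e j) else Var j)"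

lemma peval_fix_vars: "peval m (fix_vars X e t) f = peval m t (override_on f e X)"
  unfolding fix_vars_def peval_psubst
  by (rule arg_cong[where f = "peval m t"]) (auto simp: override_on_def)

lemma consts_of_fix_vars: "consts_of (fix_vars X e t) \<subseteq> consts_of t \<union> e ` X"
  unfolding fix_vars_def by (induction t) auto

definition interleave :: "'a \<Rightarrow> (nat \<Rightarrow> 'a) \<Rightarrow> (nat \<Rightarrow> 'a) \<Rightarrow> nat \<Rightarrow> 'a" where
  "interleave w e f j = (if j = 0 then w else if odd j then e (j div 2) else f (j div 2 - 1))"

lemma interleave_simps [simp]:
  "interleave w e f 0 = w" "interleave w e f (Suc (2 * i)) = e i"
  "interleave w e f (Suc (Suc (2 * i))) = f i"
  unfolding interleave_def by auto

lemma peval_interleave: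
  "peval m (psubst (\<lambda>i. Var (Suc (2 * i))) t) (interleave w e f) = peval m t e"
  "peval m (psubst (\<lambda>i. Var (Suc (Suc (2 * i)))) t) (interleave w e f) = peval m t f"
  by (simp_all add: peval_psubst)

lemma nat_interleave_cases:
  obtains "j = 0" | i where "j = Suc (2 * i)" | i where "j = Suc (Suc (2 * i))"
proof -
  consider "j = 0" | "odd j" | "j \<noteq> 0" "even j" by blast
  then show ?thesis
  proof cases
    case 2
    then have "j = Suc (2 * (j div 2))" by presburger
    then show ?thesis by (rule that(2))
  next
    case 3
    then have "j = Suc (Suc (2 * (j div 2 - 1)))" by presburger
    then show ?thesis by (rule that(3))
  qed (rule that(1))
qed

fun mul_left_iter :: "nat \<Rightarrow> 'a pterm \<Rightarrow> 'a pterm \<Rightarrow> 'a pterm" where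
  "mul_left_iter 0 a b = b"
| "mul_left_iter (Suc n) a b = Mul a (mul_left_iter n a b)"

fun mul_right_iter :: "nat \<Rightarrow> 'a pterm \<Rightarrow> 'a pterm \<Rightarrow> 'a pterm" where
  "mul_right_iter 0 a b = b"
| "mul_right_iter (Suc n) a b = Mul (mul_right_iter n a b) a"

lemma peval_mul_left_iter: "peval m (mul_left_iter n a b) e = (m (peval m a e) ^^ n) (peval m b e)"
  by (induction n) auto

lemma peval_mul_right_iter:
  "peval m (mul_right_iter n a b) e = ((\<lambda>x. m x (peval m a e)) ^^ n) (peval m b e)"
  by (induction n) auto

lemma consts_of_mul_left_iter: "consts_of (mul_left_iter n a b) \<subseteq> consts_of a \<union> consts_of b"
  by (induction n) auto

lemma consts_of_mul_right_iter: "consts_of (mul_right_iter n a b) \<subseteq> consts_of a \<union> consts_of b"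
  by (induction n) auto

lemma peval_closed:
  assumes "\<And>a b. a \<in> S \<Longrightarrow> b \<in> S \<Longrightarrow> m a b \<in> S" and "consts_of t \<subseteq> S" and "range e \<subseteq> S"
  shows "peval m t e \<in> S"
  using assms(2) by (induction t) (use assms(1,3) in auto)

lemma abelian_alg_var:
  assumes "abelian_alg A m" and "consts_of s \<subseteq> A" and "range c \<subseteq> A" "range d \<subseteq> A"
    and "u \<in> A" "v \<in> A" and "peval m s (c(i := u)) = peval m s (d(i := u))"
  shows "peval m s (c(i := v)) = peval m s (d(i := v))"
proof -
  define \<rho> where "\<rho> = id(i := 0, 0 := i)"
  define s' where "s' = psubst (\<lambda>j. Var (\<rho> j)) s"
  have swap: "peval m s' ((f \<circ> \<rho>)(0 := w)) = peval m s (f(i := w))" for f w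
    unfolding s'_def peval_psubst by (rule arg_cong[where f = "peval m s"]) (auto simp: \<rho>_def)
  have "consts_of s' \<subseteq> A" unfolding s'_def consts_of_rename using assms(2) .
  moreover have "\<forall>j. (c \<circ> \<rho>) j \<in> A" "\<forall>j. (d \<circ> \<rho>) j \<in> A" using assms(3,4) by auto
  moreover have "peval m s' ((c \<circ> \<rho>)(0 := u)) = peval m s' ((d \<circ> \<rho>)(0 := u))"
    unfolding swap by (rule assms(7))
  ultimately have "peval m s' ((c \<circ> \<rho>)(0 := v)) = peval m s' ((d \<circ> \<rho>)(0 := v))"
    using assms(1,5,6) unfolding abelian_alg_def by blast
  then show ?thesis unfolding swap .
qed

lemma abelian_alg_override_on:
  assumes "abelian_alg A m" and "finite X" and "consts_of s \<subseteq> A"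
    and "range u \<subseteq> A" "range v \<subseteq> A" "range c \<subseteq> A" "range d \<subseteq> A"
    and "peval m s (override_on c u X) = peval m s (override_on d u X)"
  shows "peval m s (override_on c v X) = peval m s (override_on d v X)"
  using assms(2,6-)
proof (induction X arbitrary: c d rule: finite_induct)
  case empty
  then show ?case by simp
next
  case (insert i X)
  have shift: "override_on (f(i := z)) w X = (override_on f w X)(i := z)" for f w z
    using insert.hyps(2) by (auto simp: override_on_def)
  have "range (c(i := u i)) \<subseteq> A" "range (d(i := u i)) \<subseteq> A"
    using insert.prems(1,2) assms(4) by auto
  then have "peval m s (override_on (c(i := u i)) v X) = peval m s (override_on (d(i := u i)) v X)"
    by (rule insert.IH) (use insert.prems(3) in \<open>simp only: override_on_insert'\<close>)
  then have eq: "peval m s ((override_on c v X)(i := u i)) = peval m s ((override_on d v X)(i := u i))"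
    unfolding shift .
  have "range (override_on c v X) \<subseteq> A" "range (override_on d v X) \<subseteq> A"
    using insert.prems(1,2) assms(5) by (auto simp: override_on_def)
  moreover have "u i \<in> A" "v i \<in> A" using assms(4,5) by auto
  ultimately have "peval m s ((override_on c v X)(i := v i)) = peval m s ((override_on d v X)(i := v i))"
    using eq by (rule abelian_alg_var[OF assms(1,3)])
  then show ?case by (simp only: override_on_insert)
qed

lemma funpow_closed: "(\<And>x. x \<in> S \<Longrightarrow> f x \<in> S) \<Longrightarrow> x \<in> S \<Longrightarrow> (f ^^ n) x \<in> S"
  by (induction n) auto

lemma bij_betw_common_period:
  assumes "finite I" "finite S" and "\<And>i. i \<in> I \<Longrightarrow> bij_betw (f i) S S"
  shows "\<exists>k>0. \<forall>i\<in>I. \<forall>y\<in>S. (f i ^^ k) y = y"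
proof -
  define g where "g n = (\<lambda>i\<in>I. \<lambda>y\<in>S. (f i ^^ n) y)" for n
  have pow: "bij_betw (f i ^^ n) S S" if "i \<in> I" for i n
    using assms(3)[OF that] by (rule bij_betw_funpow)
  have "range g \<subseteq> (\<Pi>\<^sub>E i\<in>I. S \<rightarrow>\<^sub>E S)"
    using pow bij_betwE unfolding g_def by fastforce
  moreover have "finite (\<Pi>\<^sub>E i\<in>I. S \<rightarrow>\<^sub>E S)"
    using assms(1,2) by (simp add: finite_PiE)
  ultimately have "\<not> inj g"
    using finite_subset finite_imageD infinite_UNIV_nat by blast
  then obtain i j where "i < j" "g i = g j"
    unfolding inj_def by (metis linorder_neqE_nat)
  have "(f a ^^ (j - i)) y = y" if a: "a \<in> I" and y: "y \<in> S" for a y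
  proof -
    have "(f a ^^ i) ((f a ^^ (j - i)) y) = (f a ^^ j) y"
      using \<open>i < j\<close> funpow_add[of i "j - i" "f a"] by simp
    also have "\<dots> = (f a ^^ i) y"
      using fun_cong[OF fun_cong[OF \<open>g i = g j\<close>, of a], of y] a y by (simp add: g_def)
    finally show ?thesis
      using y bij_betwE[OF pow[OF a]] inj_onD[OF bij_betw_imp_inj_on[OF pow[OF a]]] by blast
  qed
  then show ?thesis using \<open>i < j\<close> by (intro exI[of _ "j - i"]) auto
qed

locale finite_quasigroup =
  fixes A :: "'a set" and m :: "'a \<Rightarrow> 'a \<Rightarrow> 'a"
  assumes finite_carrier: "finite A" and quasigroup: "quasigroup A m"
begin

lemma mult_closed: "a \<in> A \<Longrightarrow> b \<in> A \<Longrightarrow> m a b \<in> A"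
  using conjunct1[OF quasigroup[unfolded quasigroup_def]] by blast

lemma unique_solutions:
  assumes "a \<in> A" "b \<in> A"
  shows "\<exists>!x. x \<in> A \<and> m x a = b" and "\<exists>!y. y \<in> A \<and> m a y = b"
  using conjunct2[OF quasigroup[unfolded quasigroup_def]] assms by blast+

lemma bij_betw_mult_left:
  assumes "a \<in> A" shows "bij_betw (m a) A A"
proof -
  have "inj_on (m a) A"
  proof (rule inj_onI)
    fix y y' assume "y \<in> A" "y' \<in> A" "m a y = m a y'"
    with unique_solutions(2)[OF assms mult_closed[OF assms \<open>y \<in> A\<close>]] show "y = y'"
      by (metis (no_types, lifting))
  qed
  moreover have "m a ` A \<subseteq> A" using assms mult_closed by blast
  ultimately show ?thesis unfolding bij_betw_def using endo_inj_surj[OF finite_carrier] by simp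
qed

lemma bij_betw_mult_right:
  assumes "a \<in> A" shows "bij_betw (\<lambda>x. m x a) A A"
proof -
  have "inj_on (\<lambda>x. m x a) A"
  proof (rule inj_onI)
    fix y y' assume "y \<in> A" "y' \<in> A" "m y a = m y' a"
    with unique_solutions(1)[OF assms mult_closed[OF \<open>y \<in> A\<close> assms]] show "y = y'"
      by (metis (no_types, lifting))
  qed
  moreover have "(\<lambda>x. m x a) ` A \<subseteq> A" using assms mult_closed by blast
  ultimately show ?thesis unfolding bij_betw_def using endo_inj_surj[OF finite_carrier] by simp
qed

definition period :: nat where
  "period = (SOME N. 0 < N \<and>
     (\<forall>a\<in>A. \<forall>y\<in>A. (m a ^^ N) y = y \<and> ((\<lambda>x. m x a) ^^ N) y = y))"

lemma period:
  "0 < period"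
  "a \<in> A \<Longrightarrow> y \<in> A \<Longrightarrow> (m a ^^ period) y = y"
  "a \<in> A \<Longrightarrow> y \<in> A \<Longrightarrow> ((\<lambda>x. m x a) ^^ period) y = y"
proof -
  have "bij_betw (case_sum m (\<lambda>a x. m x a) i) A A" if "i \<in> A <+> A" for i
    using that bij_betw_mult_left bij_betw_mult_right by auto
  with finite_carrier obtain N where "0 < N"
    and N: "\<forall>i\<in>A <+> A. \<forall>y\<in>A. (case_sum m (\<lambda>a x. m x a) i ^^ N) y = y"
    using bij_betw_common_period[OF finite_Plus[OF finite_carrier finite_carrier]] by metis
  have "\<forall>a\<in>A. \<forall>y\<in>A. (m a ^^ N) y = y \<and> ((\<lambda>x. m x a) ^^ N) y = y"
    using bspec[OF N InlI] bspec[OF N InrI] by simp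
  with \<open>0 < N\<close> have "\<exists>N. 0 < N \<and> (\<forall>a\<in>A. \<forall>y\<in>A. (m a ^^ N) y = y \<and> ((\<lambda>x. m x a) ^^ N) y = y)"
    by blast
  from someI_ex[OF this] show "0 < period"
    "a \<in> A \<Longrightarrow> y \<in> A \<Longrightarrow> (m a ^^ period) y = y"
    "a \<in> A \<Longrightarrow> y \<in> A \<Longrightarrow> ((\<lambda>x. m x a) ^^ period) y = y"
    unfolding period_def by blast+
qed

text \<open>The inverse of a translation is its (period - 1)-st power, so the divisions are term
  operations; this is what makes the Mal'cev operation below a term operation.\<close>

definition ldiv :: "'a \<Rightarrow> 'a \<Rightarrow> 'a" where
  "ldiv a b = (m a ^^ (period - 1)) b"

definition rdiv :: "'a \<Rightarrow> 'a \<Rightarrow> 'a" where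
  "rdiv b a = ((\<lambda>x. m x a) ^^ (period - 1)) b"

lemma period_Suc: "period = Suc (period - 1)"
  using period(1) by simp

lemma mult_ldiv: "a \<in> A \<Longrightarrow> b \<in> A \<Longrightarrow> m a (ldiv a b) = b"
  using period(2)[of a b] period_Suc unfolding ldiv_def by (metis funpow.simps(2) o_apply)

lemma mult_rdiv: "a \<in> A \<Longrightarrow> b \<in> A \<Longrightarrow> m (rdiv b a) a = b"
  using period(3)[of a b] period_Suc unfolding rdiv_def by (metis funpow.simps(2) o_apply)

lemma rdiv_mult: "a \<in> A \<Longrightarrow> b \<in> A \<Longrightarrow> rdiv (m b a) a = b"
  using period(3)[of a b] period_Suc unfolding rdiv_def by (metis funpow_Suc_right o_apply)

lemma
  assumes "\<And>x y. x \<in> S \<Longrightarrow> y \<in> S \<Longrightarrow> m x y \<in> S" and "a \<in> S" "b \<in> S"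
  shows ldiv_closed: "ldiv a b \<in> S" and rdiv_closed: "rdiv b a \<in> S"
  unfolding ldiv_def rdiv_def using assms by (auto intro: funpow_closed)

definition malcev :: "'a \<Rightarrow> 'a \<Rightarrow> 'a \<Rightarrow> 'a" where
  "malcev x y z = m (rdiv x (ldiv y y)) (ldiv y z)"

definition malcev_term :: "'a pterm \<Rightarrow> 'a pterm \<Rightarrow> 'a pterm \<Rightarrow> 'a pterm" where
  "malcev_term s t u = Mul (mul_right_iter (period - 1) (mul_left_iter (period - 1) t t) s)
                           (mul_left_iter (period - 1) t u)"

lemma peval_malcev_term:
  "peval m (malcev_term s t u) e = malcev (peval m s e) (peval m t e) (peval m u e)"
  unfolding malcev_term_def malcev_def ldiv_def rdiv_def
  by (simp add: peval_mul_left_iter peval_mul_right_iter)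

lemma consts_of_malcev_term:
  "consts_of (malcev_term s t u) \<subseteq> consts_of s \<union> consts_of t \<union> consts_of u"
  unfolding malcev_term_def using consts_of_mul_left_iter consts_of_mul_right_iter by fastforce

lemma malcev_closed:
  assumes "\<And>x y. x \<in> S \<Longrightarrow> y \<in> S \<Longrightarrow> m x y \<in> S" and "x \<in> S" "y \<in> S" "z \<in> S"
  shows "malcev x y z \<in> S"
  unfolding malcev_def using assms ldiv_closed rdiv_closed by metis

lemma malcev_left_cancel: "x \<in> A \<Longrightarrow> z \<in> A \<Longrightarrow> malcev x x z = z"
  unfolding malcev_def using mult_ldiv rdiv_mult ldiv_closed mult_closed by metis

lemma malcev_right_cancel: "x \<in> A \<Longrightarrow> z \<in> A \<Longrightarrow> malcev x z z = x"
  unfolding malcev_def using mult_rdiv ldiv_closed mult_closed by metis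

lemma inj_on_malcev: "y \<in> A \<Longrightarrow> z \<in> A \<Longrightarrow> inj_on (\<lambda>x. malcev x y z) A"
  unfolding malcev_def inj_on_def using rdiv_mult mult_rdiv ldiv_closed rdiv_closed mult_closed by metis

definition varies_within :: "'a set \<Rightarrow> nat set \<Rightarrow> (nat \<Rightarrow> 'a) \<Rightarrow> (nat \<Rightarrow> 'a) \<Rightarrow> bool" where
  "varies_within B X e1 e2 \<longleftrightarrow> finite X \<and> range e1 \<subseteq> A \<and> range e2 \<subseteq> A \<and>
     e1 ` X \<subseteq> B \<and> e2 ` X \<subseteq> B \<and> (\<forall>i. i \<notin> X \<longrightarrow> e1 i = e2 i)"

text \<open>For a subalgebra B this is the congruence generated by B \<times> B.\<close>

definition block_cong :: "'a set \<Rightarrow> 'a rel" where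
  "block_cong B = {(peval m t e1, peval m t e2) | t X e1 e2.
     consts_of t = {} \<and> varies_within B X e1 e2}"

lemma block_congI:
  "consts_of t = {} \<Longrightarrow> varies_within B X e1 e2 \<Longrightarrow> (peval m t e1, peval m t e2) \<in> block_cong B"
  unfolding block_cong_def by blast

lemma block_congE:
  assumes "(a, b) \<in> block_cong B"
  obtains t X e1 e2 where "consts_of t = {}" "varies_within B X e1 e2"
    "a = peval m t e1" "b = peval m t e2"
  using assms unfolding block_cong_def by blast

lemma varies_within_interleave:
  assumes "varies_within B X e1 e2" "varies_within B X' f1 f2" "w \<in> A"
  shows "varies_within B ((\<lambda>i. Suc (2 * i)) ` X \<union> (\<lambda>i. Suc (Suc (2 * i))) ` X')
           (interleave w e1 f1) (interleave w e2 f2)"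
proof -
  have "interleave w e1 f1 j = interleave w e2 f2 j"
    if "j \<notin> (\<lambda>i. Suc (2 * i)) ` X \<union> (\<lambda>i. Suc (Suc (2 * i))) ` X'" for j
    using assms(1,2) that by (cases j rule: nat_interleave_cases) (auto simp: varies_within_def)
  moreover have "range (interleave w e1 f1) \<subseteq> A" "range (interleave w e2 f2) \<subseteq> A"
    using assms unfolding varies_within_def interleave_def by auto
  ultimately show ?thesis
    using assms(1,2) unfolding varies_within_def by auto
qed

lemma block_cong_pairE:
  assumes "(a, b) \<in> block_cong B" "(c, d) \<in> block_cong B" "w \<in> A"
  obtains t t' X e1 e2 where "consts_of t = {}" "consts_of t' = {}" "varies_within B X e1 e2"
    "e1 0 = w" "e2 0 = w" "a = peval m t e1" "b = peval m t e2" "c = peval m t' e1" "d = peval m t' e2"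
proof -
  obtain t X e1 e2 where t: "consts_of t = {}" "varies_within B X e1 e2"
    "a = peval m t e1" "b = peval m t e2"
    using assms(1) by (rule block_congE)
  obtain t' X' f1 f2 where t': "consts_of t' = {}" "varies_within B X' f1 f2"
    "c = peval m t' f1" "d = peval m t' f2"
    using assms(2) by (rule block_congE)
  have c: "consts_of (psubst (\<lambda>i. Var (Suc (2 * i))) t) = {}"
    "consts_of (psubst (\<lambda>i. Var (Suc (Suc (2 * i)))) t') = {}"
    using t(1) t'(1) by (simp_all only: consts_of_rename)
  show ?thesis
    using that[OF c varies_within_interleave[OF t(2) t'(2) assms(3)]] t t'
    by (simp add: peval_interleave)
qed

lemma block_cong_subset: "block_cong B \<subseteq> A \<times> A"
  using peval_closed[of A m] mult_closed unfolding block_cong_def varies_within_def by fastforce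

lemma block_cong_refl: "a \<in> A \<Longrightarrow> (a, a) \<in> block_cong B"
  using block_congI[of "Var 0" B "{}" "\<lambda>_. a" "\<lambda>_. a"] by (simp add: varies_within_def)

lemma block_cong_sym:
  assumes "(a, b) \<in> block_cong B" shows "(b, a) \<in> block_cong B"
proof -
  obtain t X e1 e2 where t: "consts_of t = {}" "varies_within B X e1 e2"
    "a = peval m t e1" "b = peval m t e2"
    using assms by (rule block_congE)
  have "varies_within B X e2 e1" using t(2) unfolding varies_within_def by auto
  from block_congI[OF t(1) this] show ?thesis using t(3,4) by simp
qed

lemma block_cong_trans:
  assumes "(a, b) \<in> block_cong B" "(b, c) \<in> block_cong B"
  shows "(a, c) \<in> block_cong B"
proof -
  have A: "a \<in> A" "b \<in> A" "c \<in> A" using assms block_cong_subset by auto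
  obtain t t' X e1 e2 where t: "consts_of t = {}" "consts_of t' = {}" "varies_within B X e1 e2"
    "e1 0 = b" "e2 0 = b" "a = peval m t e1" "b = peval m t e2" "b = peval m t' e1" "c = peval m t' e2"
    using assms A(2) by (rule block_cong_pairE)
  have "consts_of (malcev_term t (Var 0) t') = {}"
    using consts_of_malcev_term[of t "Var 0" t'] t(1,2) by simp
  from block_congI[OF this t(3)] show ?thesis
    using t A by (simp add: peval_malcev_term malcev_left_cancel malcev_right_cancel)
qed

lemma block_cong_compat:
  assumes "(a, b) \<in> block_cong B" "(c, d) \<in> block_cong B"
  shows "(m a c, m b d) \<in> block_cong B"
proof -
  have "a \<in> A" using assms(1) block_cong_subset by auto
  with assms obtain t t' X e1 e2 where t: "consts_of t = {}" "consts_of t' = {}"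
    "varies_within B X e1 e2" "a = peval m t e1" "b = peval m t e2" "c = peval m t' e1" "d = peval m t' e2"
    by (rule block_cong_pairE)
  from block_congI[of "Mul t t'", OF _ t(3)] show ?thesis using t by simp
qed

lemma congruence_block_cong: "congruence A m (block_cong B)"
  unfolding congruence_def equiv_def refl_on_def sym_def trans_def
  using block_cong_subset block_cong_refl block_cong_sym block_cong_trans block_cong_compat
  by blast

text \<open>The term condition, applied to the polynomial
  y \<mapsto> malcev (t y) (t (override_on y u X)) (t (override_on c u X)), which takes the same
  value at override_on d u X and at override_on c u X.\<close>

lemma malcev_override_on:
  assumes "abelian_alg A m" and "finite X" and "consts_of t \<subseteq> A"
    and "range c \<subseteq> A" "range d \<subseteq> A" "range u \<subseteq> A" "range v \<subseteq> A"
  shows "malcev (peval m t (override_on d v X)) (peval m t (override_on d u X))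
           (peval m t (override_on c u X)) = peval m t (override_on c v X)"
proof -
  define k where "k = peval m t (override_on c u X)"
  define s where "s = malcev_term t (fix_vars X u t) (Const k)"
  have t_in_A: "peval m t e \<in> A" if "range e \<subseteq> A" for e
    using peval_closed[OF mult_closed assms(3) that] .
  have override_in_A: "range (override_on f g X) \<subseteq> A" if "range f \<subseteq> A" "range g \<subseteq> A" for f g
    using that by (auto simp: override_on_def)
  have "k \<in> A" unfolding k_def using assms(4,6) by (intro t_in_A override_in_A)
  have s_val: "peval m s e = malcev (peval m t e) (peval m t (override_on e u X)) k" for e
    unfolding s_def peval_malcev_term peval_fix_vars by simp
  have "u ` X \<subseteq> A" using assms(6) by auto
  with assms(3) have "consts_of (fix_vars X u t) \<subseteq> A"
    by (intro order_trans[OF consts_of_fix_vars] Un_least)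
  then have s_consts: "consts_of s \<subseteq> A"
    using consts_of_malcev_term[of t "fix_vars X u t" "Const k"] assms(3) \<open>k \<in> A\<close>
    unfolding s_def by auto
  have override_twice: "override_on (override_on f g X) u X = override_on f u X" for f g
    by (auto simp: override_on_def)
  have "peval m s (override_on d u X) = peval m s (override_on c u X)"
    using assms(4-6) \<open>k \<in> A\<close>
    by (simp add: s_val override_twice malcev_left_cancel t_in_A override_in_A flip: k_def)
  then have "peval m s (override_on d v X) = peval m s (override_on c v X)"
    by (rule abelian_alg_override_on[OF assms(1,2) s_consts assms(6,7,5,4)])
  then show ?thesis
    using assms(4-7) \<open>k \<in> A\<close>
    by (simp add: s_val override_twice malcev_right_cancel t_in_A override_in_A flip: k_def)
qed

lemma malcev_mem_subalgebra:
  assumes "abelian_alg A m" and sub: "subalgebra A m B"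
    and "(a, b) \<in> block_cong B" and "a \<in> B"
  shows "\<exists>k\<in>B. malcev b a k \<in> B"
proof -
  obtain t X e1 e2 where t: "consts_of t = {}" "varies_within B X e1 e2"
    "a = peval m t e1" "b = peval m t e2"
    using assms(3) by (rule block_congE)
  have e: "finite X" "range e1 \<subseteq> A" "range e2 \<subseteq> A" "e1 ` X \<subseteq> B" "e2 ` X \<subseteq> B"
    "override_on e1 e2 X = e2" "override_on e1 e1 X = e1"
    using t(2) unfolding varies_within_def by (auto simp: override_on_def)
  have BA: "B \<subseteq> A" and B_closed: "\<And>x y. x \<in> B \<Longrightarrow> y \<in> B \<Longrightarrow> m x y \<in> B"
    using sub unfolding subalgebra_def by auto
  obtain b0 where "b0 \<in> B" using sub unfolding subalgebra_def by blast
  have in_B: "peval m t (override_on (\<lambda>_. b0) e X) \<in> B" if "e ` X \<subseteq> B" for e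
    using \<open>b0 \<in> B\<close> that t(1)
    by (intro peval_closed[OF B_closed]) (auto simp: override_on_def)
  have "malcev b a (peval m t (override_on (\<lambda>_. b0) e1 X)) = peval m t (override_on (\<lambda>_. b0) e2 X)"
    using malcev_override_on[OF assms(1) e(1) _ _ e(2,2,3)] t(1,3,4) e(6,7) \<open>b0 \<in> B\<close> BA by auto
  then have "malcev b a (peval m t (override_on (\<lambda>_. b0) e1 X)) \<in> B"
    using in_B[OF e(5)] by (rule ssubst)
  then show ?thesis using in_B[OF e(4)] by (rule bexI)
qed

lemma mem_subalgebra_if_malcev:
  assumes sub: "subalgebra A m B" and "a \<in> B" "k \<in> B" "b \<in> A" and "malcev b a k \<in> B"
  shows "b \<in> B"
proof -
  have BA: "B \<subseteq> A" and B_closed: "\<And>x y. x \<in> B \<Longrightarrow> y \<in> B \<Longrightarrow> m x y \<in> B"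
    using sub unfolding subalgebra_def by auto
  have inj: "inj_on (\<lambda>x. malcev x a k) A"
    using assms(2,3) BA by (intro inj_on_malcev) auto
  have "(\<lambda>x. malcev x a k) ` B = B"
  proof (rule endo_inj_surj)
    show "finite B" using finite_carrier BA by (rule finite_subset[rotated])
    show "(\<lambda>x. malcev x a k) ` B \<subseteq> B" using malcev_closed[OF B_closed _ assms(2,3)] by auto
    show "inj_on (\<lambda>x. malcev x a k) B" using inj BA by (rule inj_on_subset)
  qed
  with assms(5) obtain b' where "b' \<in> B" and "malcev b a k = malcev b' a k"
    by auto
  with inj_onD[OF inj] \<open>b \<in> A\<close> BA have "b = b'" by auto
  with \<open>b' \<in> B\<close> show ?thesis by simp
qed

lemma subalgebra_in_quotient_block_cong:
  assumes "abelian_alg A m" and sub: "subalgebra A m B"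
  shows "B \<in> A // block_cong B"
proof -
  obtain b0 where "b0 \<in> B" and BA: "B \<subseteq> A" using sub unfolding subalgebra_def by blast
  have "block_cong B `` {b0} = B"
  proof
    show "block_cong B `` {b0} \<subseteq> B"
    proof
      fix b assume "b \<in> block_cong B `` {b0}"
      then have "(b0, b) \<in> block_cong B" by simp
      then have "\<exists>k\<in>B. malcev b b0 k \<in> B"
        using \<open>b0 \<in> B\<close> by (rule malcev_mem_subalgebra[OF assms])
      then obtain k where "k \<in> B" and k: "malcev b b0 k \<in> B" ..
      have "b \<in> A" using \<open>(b0, b) \<in> block_cong B\<close> block_cong_subset by auto
      from mem_subalgebra_if_malcev[OF sub \<open>b0 \<in> B\<close> \<open>k \<in> B\<close> this k] show "b \<in> B" .
    qed
    show "B \<subseteq> block_cong B `` {b0}"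
    proof
      fix b assume "b \<in> B"
      have "varies_within B {0} (\<lambda>_. b0) ((\<lambda>_. b0)(0 := b))"
        using \<open>b0 \<in> B\<close> \<open>b \<in> B\<close> BA unfolding varies_within_def by auto
      from block_congI[of "Var 0", OF _ this] show "b \<in> block_cong B `` {b0}" by simp
    qed
  qed
  moreover have "block_cong B `` {b0} \<in> A // block_cong B"
    using \<open>b0 \<in> B\<close> BA by (intro quotientI) auto
  ultimately show ?thesis by simp
qed

lemma hamiltonian: "abelian_alg A m \<Longrightarrow> hamiltonian_alg A m"
  unfolding hamiltonian_alg_def
  using congruence_block_cong subalgebra_in_quotient_block_cong by auto

end

theorem mainTheorem9:
  fixes A :: "'a set" and m :: "'a \<Rightarrow> 'a \<Rightarrow> 'a"
  assumes "finite A" and "quasigroup A m" and "abelian_alg A m"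
  shows "hamiltonian_alg A m"
proof -
  interpret finite_quasigroup A m using assms(1,2) by unfold_locales
  show ?thesis using assms(3) by (rule hamiltonian)
qed

end
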